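(* Assume the rationality condition and $c^{(2)}\mathbb E A-\mathbb E B^{(2)}>0$. Then for each $s_1$ with $\mathrm{Re}\,s_1\ge0$, the polynomials $z\mapsto g(s_1,z)-f(s_1,z)$ and $z\mapsto g(s_1,z)$ have the same number of zeroes (counted with multiplicity) in $\mathrm{Re}\,z\ge0$.
   Context: Let $(A,B^{(1)},B^{(2)})$ be a random triple with nonnegative components, $A>0$ a.s., and $c^{(1)},c^{(2)}>0$. Assume $B^{(1)}/c^{(1)}\ge B^{(2)}/c^{(2)}$ a.s., and set $D:=B^{(1)}/c^{(1)}-B^{(2)}/c^{(2)}\ge0$, $X^{(2)}:=A-B^{(2)}/c^{(2)}$. Rationality: $H(q_0,q_1,q_2)=\mathbb E e^{-q_0A-q_1B^{(1)}-q_2B^{(2)}}$ is a rational function, so that $\mathbb E e^{-s_1D+zX^{(2)}}=f(s_1,z)/g(s_1,z)$ with $f,g$ polynomials and, for each fixed $s_1$, $\deg_z f(s_1,\cdot)<\deg_z g(s_1,\cdot)$. *)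

theory Defs
  imports "HOL-Probability.Probability" "HOL-Computational_Algebra.Polynomial"
begin

text \<open>Bivariate polynomials in (s, z) are represented as polynomials in z whose
  coefficients are polynomials in s.  \<open>sect2 F s\<close> is the one-variable
  polynomial z \<mapsto> F(s,z).\<close>
definition sect2 :: "complex poly poly \<Rightarrow> complex \<Rightarrow> complex poly" where
  "sect2 F s = map_poly (\<lambda>c. poly c s) F"

definition eval2 :: "complex poly poly \<Rightarrow> complex \<Rightarrow> complex \<Rightarrow> complex" where
  "eval2 F s z = poly (sect2 F s) z"

text \<open>Trivariate polynomials in (q0,q1,q2): nested polynomials, innermost variable q0.\<close>
definition eval3 :: "complex poly poly poly \<Rightarrow> complex \<Rightarrow> complex \<Rightarrow> complex \<Rightarrow> complex" where
  "eval3 P q0 q1 q2 = poly (map_poly (\<lambda>c. poly (map_poly (\<lambda>d. poly d q0) c) q1) P) q2"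

definition zeros_rhp :: "complex poly \<Rightarrow> nat" where
  "zeros_rhp p = (\<Sum>z\<in>{z. poly p z = 0 \<and> Re z \<ge> 0}. order z p)"

end

theory Submission
  imports Defs "HOL-Complex_Analysis.Complex_Analysis"
    "HOL-Computational_Algebra.Polynomial_Factorial" "HOL-Computational_Algebra.Field_as_Ring"
begin

(* Fix s1 with Re s1 >= 0 and put p = g(s1,.), q = f(s1,.), D = B1/c1 - B2/c2 >= 0
   and X = A - B2/c2, so that E X > 0 by the drift condition.  On the imaginary axis z = iy the
   ratio q/p agrees (away from the finitely many zeros of p) with the transform
   phi(y) = E exp(-s1 D + iy X), which has modulus at most 1.  After cancelling h = gcd p q, the
   reduced ratio R = q1/p1 therefore has no pole on the axis and |R| <= 1 there.  At a point with
   |R(iy0)| = 1 the integrand is a.s. constant, which yields phi(y0+t) = phi(y0) psi(t) with psi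
   the characteristic function of X; differentiating gives Re(conj R * R') = E X > 0, so |R|
   strictly decreases when moving to the left of the axis.  Hence |q| < |p| on a vertical line
   Re z = -d for small d > 0, and on the rest of a large rectangle because deg q < deg p.
   Rouche's theorem on that rectangle yields the claim. *)


lemma zorder_poly:
  fixes p :: "complex poly"
  assumes "p \<noteq> 0"
  shows "zorder (poly p) a = int (order a p)"
proof -
  obtain r where r: "p = [:- a, 1:] ^ order a p * r" "\<not> [:- a, 1:] dvd r"
    using order_decomp[OF assms] by blast
  have "poly r a \<noteq> 0" using r(2) by (simp add: poly_eq_0_iff_dvd)
  show ?thesis
  proof (rule zorder_eqI[of UNIV a "poly r"])
    fix w :: complex
    show "poly p w = poly r w * (w - a) powi int (order a p)"
      by (subst r(1)) (simp add: poly_power mult.commute)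
  qed (use \<open>poly r a \<noteq> 0\<close> in \<open>auto intro!: holomorphic_intros\<close>)
qed

lemma poly_dominates_at_infinity:
  fixes p q :: "complex poly"
  assumes "degree q < degree p"
  shows "\<exists>R. \<forall>z. R \<le> norm z \<longrightarrow> cmod (poly q z) < cmod (poly p z)"
proof -
  have "((\<lambda>x. poly q x / poly p x) \<longlongrightarrow> 0) at_infinity"
    by (rule poly_divide_tendsto_0_at_infinity[OF assms])
  hence small: "eventually (\<lambda>x. norm (poly q x / poly p x) < 1) at_infinity"
    by (rule order_tendstoD(2)[OF tendsto_norm_zero, simplified]) simp
  have "filterlim (poly p) at_infinity at_infinity"
    using assms by (intro filterlim_poly_at_infinity) simp
  hence large: "eventually (\<lambda>x. norm (poly p x) \<ge> 1) at_infinity"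
    by (simp add: filterlim_at_infinity_conv_norm_at_top filterlim_at_top)
  have "eventually (\<lambda>x. cmod (poly q x) < cmod (poly p x)) at_infinity"
    using small large
  proof eventually_elim
    case (elim x)
    hence "poly p x \<noteq> 0" by auto
    thus ?case using elim(1) by (simp add: norm_divide divide_less_eq)
  qed
  thus ?thesis by (simp add: eventually_at_infinity)
qed

(* If all zeros of r lie in the disc |z| < T and those in the open left half plane lie to the
   left of Re z = -d, then the rectangle [-d,T] x [-T,T] winds exactly once around the zeros in
   the closed right half plane and not around the others. *)
lemma winding_sum_rectpath_zeros_rhp:
  fixes r :: "complex poly" and d T :: real
  assumes r0: "r \<noteq> 0" and d: "d > 0"
    and inT: "\<And>z. poly r z = 0 \<Longrightarrow> norm z < T"
    and lhp: "\<And>z. poly r z = 0 \<Longrightarrow> Re z < 0 \<Longrightarrow> Re z < - d"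
  shows "(\<Sum>z\<in>{z. poly r z = 0}. winding_number (rectpath (Complex (-d) (-T)) (Complex T T)) z
            * of_int (zorder (poly r) z)) = of_nat (zeros_rhp r)"
proof -
  define S where "S = {z. poly r z = 0}"
  define Sp where "Sp = {z. poly r z = 0 \<and> 0 \<le> Re z}"
  let ?w = "winding_number (rectpath (Complex (-d) (-T)) (Complex T T))"
  have fin: "finite S" unfolding S_def using r0 by (rule poly_roots_finite)
  have "(\<Sum>z\<in>S. ?w z * of_int (zorder (poly r) z)) = (\<Sum>z\<in>Sp. ?w z * of_int (zorder (poly r) z))"
  proof (rule sum.mono_neutral_right[OF fin])
    show "Sp \<subseteq> S" unfolding S_def Sp_def by auto
    show "\<forall>z\<in>S - Sp. ?w z * of_int (zorder (poly r) z) = 0"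
    proof
      fix z assume "z \<in> S - Sp"
      hence z: "poly r z = 0" "Re z < 0" unfolding S_def Sp_def by auto
      hence "z \<notin> cbox (Complex (-d) (-T)) (Complex T T)"
        using lhp[OF z] by (auto simp: in_cbox_complex_iff)
      moreover have "0 \<le> T" using inT[OF z(1)] norm_ge_zero[of z] by linarith
      ultimately have "?w z = 0" using d by (intro winding_number_rectpath_outside) auto
      thus "?w z * of_int (zorder (poly r) z) = 0" by simp
    qed
  qed
  also have "\<dots> = (\<Sum>z\<in>Sp. of_nat (order z r))"
  proof (rule sum.cong[OF refl])
    fix z assume "z \<in> Sp"
    hence z: "poly r z = 0" "0 \<le> Re z" unfolding Sp_def by auto
    have "norm z < T" by (rule inT[OF z(1)])
    hence "\<bar>Im z\<bar> < T" "Re z < T" using abs_Im_le_cmod[of z] abs_Re_le_cmod[of z] by linarith+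
    hence "z \<in> box (Complex (-d) (-T)) (Complex T T)" using z(2) d
      by (auto simp: in_box_complex_iff)
    hence "?w z = 1" by (rule winding_number_rectpath)
    thus "?w z * of_int (zorder (poly r) z) = of_nat (order z r)"
      by (simp add: zorder_poly[OF r0])
  qed
  also have "\<dots> = of_nat (zeros_rhp r)" unfolding zeros_rhp_def Sp_def by simp
  finally show ?thesis unfolding S_def .
qed

lemma zeros_rhp_rouche_rectpath:
  fixes p q :: "complex poly" and d T :: real
  assumes p0: "p \<noteq> 0" and pq0: "p - q \<noteq> 0" and d: "d > 0"
    and inT: "\<And>z. poly p z = 0 \<or> poly (p - q) z = 0 \<Longrightarrow> norm z < T"
    and lhp: "\<And>z. poly p z = 0 \<or> poly (p - q) z = 0 \<Longrightarrow> Re z < 0 \<Longrightarrow> Re z < - d"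
    and boundary: "\<And>z. z \<in> path_image (rectpath (Complex (-d) (-T)) (Complex T T)) \<Longrightarrow>
        cmod (poly q z) < cmod (poly p z)"
  shows "zeros_rhp (p - q) = zeros_rhp p"
proof -
  define \<gamma> where "\<gamma> = rectpath (Complex (-d) (-T)) (Complex T T)"
  have "(\<Sum>z\<in>{z \<in> UNIV. poly p z + - poly q z = 0}.
          winding_number \<gamma> z * of_int (zorder (\<lambda>z. poly p z + - poly q z) z))
      = (\<Sum>z\<in>{z \<in> UNIV. poly p z = 0}. winding_number \<gamma> z * of_int (zorder (poly p) z))"
  proof (rule Rouche_theorem[of UNIV "poly p" "\<lambda>z. - poly q z" \<gamma>])
    show "finite {z \<in> UNIV. poly p z + - poly q z = 0}"
      using poly_roots_finite[OF pq0] by simp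
    show "finite {z \<in> UNIV. poly p z = 0}" using poly_roots_finite[OF p0] by simp
    show "\<forall>z\<in>path_image \<gamma>. cmod (- poly q z) < cmod (poly p z)"
      using boundary by (simp add: \<gamma>_def)
  qed (auto simp: \<gamma>_def intro!: holomorphic_intros)
  moreover have "(\<lambda>z. poly p z + - poly q z) = poly (p - q)" by auto
  moreover have "(\<Sum>z\<in>{z. poly (p - q) z = 0}. winding_number \<gamma> z * of_int (zorder (poly (p - q)) z))
      = of_nat (zeros_rhp (p - q))"
    unfolding \<gamma>_def by (rule winding_sum_rectpath_zeros_rhp[OF pq0 d]) (auto intro: inT lhp)
  moreover have "(\<Sum>z\<in>{z. poly p z = 0}. winding_number \<gamma> z * of_int (zorder (poly p) z))
      = of_nat (zeros_rhp p)"
    unfolding \<gamma>_def by (rule winding_sum_rectpath_zeros_rhp[OF p0 d]) (auto intro: inT lhp)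
  ultimately have "(of_nat (zeros_rhp (p - q)) :: complex) = of_nat (zeros_rhp p)" by simp
  thus ?thesis by simp
qed

lemma exists_line_left_of_axis:
  fixes Z :: "complex set" and B :: "real set" and \<delta> :: real
  assumes "finite Z" "finite B" "\<delta> > 0"
  shows "\<exists>d. 0 < d \<and> d \<le> \<delta> \<and> d \<notin> B \<and> (\<forall>z\<in>Z. Re z < 0 \<longrightarrow> Re z < - d)"
proof -
  define L where "L = (\<lambda>z. - Re z) ` {z\<in>Z. Re z < 0}"
  define m where "m = Min (insert \<delta> L)"
  have finL: "finite L" unfolding L_def using assms(1) by simp
  have m0: "m > 0" unfolding m_def using finL assms(3) by (auto simp: L_def)
  have m\<delta>: "m \<le> \<delta>" unfolding m_def using finL by simp
  have mL: "m \<le> - Re z" if "z \<in> Z" "Re z < 0" for z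
    unfolding m_def using finL that by (intro Min_le) (auto simp: L_def)
  have "infinite ({0<..<m} - B)" using assms(2) m0 by (intro Diff_infinite_finite) auto
  hence "{0<..<m} - B \<noteq> {}" by (rule infinite_imp_nonempty)
  then obtain d where "d \<in> {0<..<m}" "d \<notin> B" by blast
  thus ?thesis using m\<delta> mL by (intro exI[of _ d]) force
qed

lemma rectpath_boundary_domination:
  fixes p q h p1 q1 :: "complex poly" and d T R0 :: real
  assumes pq: "p = h * p1" "q = h * q1" and d: "d > 0" and T: "T > 0"
    and far: "\<And>z. R0 \<le> norm z \<Longrightarrow> cmod (poly q z) < cmod (poly p z)" and R0: "R0 < T"
    and left: "\<And>y. \<bar>y\<bar> \<le> T \<Longrightarrow> cmod (poly q1 (Complex (-d) y)) < cmod (poly p1 (Complex (-d) y))"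
    and h: "\<And>y. poly h (Complex (-d) y) \<noteq> 0"
    and z: "z \<in> path_image (rectpath (Complex (-d) (-T)) (Complex T T))"
  shows "cmod (poly q z) < cmod (poly p z)"
proof -
  have "Re (Complex (-d) (-T)) \<le> Re (Complex T T)" "Im (Complex (-d) (-T)) \<le> Im (Complex T T)"
    using d T by simp_all
  hence "z \<in> cbox (Complex (-d) (-T)) (Complex T T) - box (Complex (-d) (-T)) (Complex T T)"
    using z path_image_rectpath_cbox_minus_box by simp
  hence zz: "-d \<le> Re z" "Re z \<le> T" "-T \<le> Im z" "Im z \<le> T"
    "Re z = -d \<or> Re z = T \<or> Im z = -T \<or> Im z = T"
    by (auto simp: in_cbox_complex_iff in_box_complex_iff)
  show ?thesis
  proof (cases "Re z = -d")
    case True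
    hence zd: "z = Complex (-d) (Im z)" by (simp add: complex_eq_iff)
    hence "cmod (poly q1 z) < cmod (poly p1 z)" using left[of "Im z"] zz by auto
    moreover have "poly h z \<noteq> 0" using h[of "Im z"] zd by simp
    ultimately show ?thesis using pq by (simp add: norm_mult)
  next
    case False
    hence "T \<le> norm z" using zz abs_Re_le_cmod[of z] abs_Im_le_cmod[of z] by auto
    thus ?thesis using far R0 by auto
  qed
qed

lemma zeros_rhp_perturbation:
  fixes p q h p1 q1 :: "complex poly"
  assumes pq: "p = h * p1" "q = h * q1" and deg: "degree q < degree p"
    and left: "\<And>T. \<exists>\<delta>>0. \<forall>d. 0 < d \<and> d \<le> \<delta> \<longrightarrow> (\<forall>y. \<bar>y\<bar> \<le> T \<longrightarrow>
        cmod (poly q1 (Complex (-d) y)) < cmod (poly p1 (Complex (-d) y)))"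
  shows "zeros_rhp (p - q) = zeros_rhp p"
proof -
  have p0: "p \<noteq> 0" and pq0: "p - q \<noteq> 0" using deg by auto
  have h0: "h \<noteq> 0" using p0 pq by auto
  define Z where "Z = {z. poly p z = 0} \<union> {z. poly (p - q) z = 0}"
  have finZ: "finite Z" unfolding Z_def using poly_roots_finite[OF p0] poly_roots_finite[OF pq0] by simp
  obtain R0 where R0: "\<And>z. R0 \<le> norm z \<Longrightarrow> cmod (poly q z) < cmod (poly p z)"
    using poly_dominates_at_infinity[OF deg] by blast
  define T where "T = max (max R0 0) (Max (insert 0 (norm ` Z))) + 1"
  have TZ: "norm z < T" if "z \<in> Z" for z
  proof -
    have "norm z \<le> Max (insert 0 (norm ` Z))" using finZ that by (intro Max_ge) auto
    thus ?thesis unfolding T_def by linarith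
  qed
  have TR: "R0 < T" "0 < T" unfolding T_def by linarith+
  obtain \<delta> where \<delta>: "\<delta> > 0" and dom: "\<And>d y. 0 < d \<Longrightarrow> d \<le> \<delta> \<Longrightarrow> \<bar>y\<bar> \<le> T \<Longrightarrow>
        cmod (poly q1 (Complex (-d) y)) < cmod (poly p1 (Complex (-d) y))"
    using left[of T] by blast
  \<comment> \<open>the line Re z = -d must avoid the zeros of the common factor h\<close>
  obtain d where d: "0 < d" "d \<le> \<delta>" "d \<notin> (\<lambda>z. - Re z) ` {z. poly h z = 0}"
    and dZ: "\<And>z. z \<in> Z \<Longrightarrow> Re z < 0 \<Longrightarrow> Re z < - d"
    using exists_line_left_of_axis[OF finZ _ \<delta>, of "(\<lambda>z. - Re z) ` {z. poly h z = 0}"]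
      poly_roots_finite[OF h0] by auto
  have h_line: "poly h (Complex (-d) y) \<noteq> 0" for y
  proof
    assume "poly h (Complex (-d) y) = 0"
    hence "d \<in> (\<lambda>z. - Re z) ` {z. poly h z = 0}" by force
    with d(3) show False by simp
  qed
  have boundary: "cmod (poly q z) < cmod (poly p z)"
    if "z \<in> path_image (rectpath (Complex (-d) (-T)) (Complex T T))" for z
    by (rule rectpath_boundary_domination[OF pq d(1) TR(2) R0 TR(1) dom[OF d(1,2)] h_line that])
  show ?thesis
    by (rule zeros_rhp_rouche_rectpath[OF p0 pq0 d(1) _ _ boundary]) (auto simp: Z_def intro: TZ dZ)
qed


lemma has_real_derivative_norm_square_horizontal:
  fixes R :: "complex \<Rightarrow> complex"
  assumes "(R has_field_derivative D) (at (Complex t y))"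
  shows "((\<lambda>s. (cmod (R (Complex s y)))^2) has_real_derivative 2 * Re (cnj (R (Complex t y)) * D)) (at t)"
proof -
  define F where "F = (\<lambda>s::real. R (Complex s y))"
  have "(\<lambda>s::real. Complex s y) = (\<lambda>s. of_real s + \<i> * of_real y)"
    by (auto simp: complex_eq_iff)
  hence "((\<lambda>s::real. Complex s y) has_vector_derivative 1) (at t)"
    by (auto intro!: derivative_eq_intros)
  from field_vector_diff_chain_at[OF this assms]
  have F: "(F has_vector_derivative D) (at t)" by (simp add: F_def o_def)
  have "((\<lambda>s. F s * cnj (F s)) has_vector_derivative (F t * cnj D + D * cnj (F t))) (at t)"
    using has_vector_derivative_mult[OF F has_vector_derivative_cnj[OF F]]
    by (simp add: algebra_simps)
  hence "((\<lambda>s. Re (F s * cnj (F s))) has_field_derivative Re (F t * cnj D + D * cnj (F t))) (at t)"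
    by (rule has_field_derivative_Re)
  moreover have "\<And>s. Re (F s * cnj (F s)) = (cmod (F s))^2"
    by (simp add: complex_mult_cnj cmod_power2)
  moreover have "Re (F t * cnj D + D * cnj (F t)) = 2 * Re (cnj (F t) * D)"
    by simp
  ultimately show ?thesis unfolding F_def by (simp add: mult.commute)
qed

lemma norm_increases_rightwards:
  fixes R :: "complex \<Rightarrow> complex" and U :: "complex set"
  assumes U: "open U" and holo: "R holomorphic_on U" and d: "d > 0"
    and seg: "\<And>s. -d \<le> s \<Longrightarrow> s \<le> 0 \<Longrightarrow>
        Complex s y \<in> U \<and> Re (cnj (R (Complex s y)) * deriv R (Complex s y)) > 0"
  shows "cmod (R (Complex (-d) y)) < cmod (R (Complex 0 y))"
proof -
  have "\<exists>\<xi>. -d < \<xi> \<and> \<xi> < 0 \<and> (cmod (R (Complex 0 y)))^2 - (cmod (R (Complex (-d) y)))^2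
          = (0 - (-d)) * (2 * Re (cnj (R (Complex \<xi> y)) * deriv R (Complex \<xi> y)))"
  proof (rule MVT2)
    fix s assume s: "-d \<le> s" "s \<le> 0"
    have "(R has_field_derivative deriv R (Complex s y)) (at (Complex s y))"
      using seg[OF s] holo U by (intro holomorphic_derivI) auto
    thus "((\<lambda>s. (cmod (R (Complex s y)))\<^sup>2) has_real_derivative
            2 * Re (cnj (R (Complex s y)) * deriv R (Complex s y))) (at s)"
      by (rule has_real_derivative_norm_square_horizontal)
  qed (use d in auto)
  then obtain \<xi> where \<xi>: "-d < \<xi>" "\<xi> < 0"
    and mvt: "(cmod (R (Complex 0 y)))^2 - (cmod (R (Complex (-d) y)))^2
          = d * (2 * Re (cnj (R (Complex \<xi> y)) * deriv R (Complex \<xi> y)))" by auto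
  have "0 < d * (2 * Re (cnj (R (Complex \<xi> y)) * deriv R (Complex \<xi> y)))"
    using seg[of \<xi>] \<xi> d by simp
  hence "(cmod (R (Complex (-d) y)))^2 < (cmod (R (Complex 0 y)))^2" using mvt by linarith
  thus ?thesis by (rule power_less_imp_less_base) simp
qed

lemma dist_left_of_axis:
  assumes "\<bar>y - y0\<bar> < r/2" "0 \<le> d" "d \<le> r/2"
  shows "dist (Complex (-d) y) (Complex 0 y0) < r"
proof -
  have "dist (Complex (-d) y) (Complex 0 y0) = cmod (Complex (-d) (y - y0))"
    unfolding dist_norm by (rule arg_cong[where f=cmod]) (simp add: complex_eq_iff)
  also have "\<dots> \<le> \<bar>-d\<bar> + \<bar>y - y0\<bar>" using cmod_le[of "Complex (-d) (y - y0)"] by simp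
  finally show ?thesis using assms by linarith
qed

lemma norm_lt_one_left_near_interior_point:
  fixes R :: "complex \<Rightarrow> complex" and U :: "complex set"
  assumes U: "open U" and contR: "continuous_on U R"
    and z0U: "Complex 0 y0 \<in> U" and lt: "cmod (R (Complex 0 y0)) < 1"
  shows "\<exists>e>0. \<exists>\<delta>>0. \<forall>y d. \<bar>y - y0\<bar> < e \<longrightarrow> 0 < d \<longrightarrow> d \<le> \<delta> \<longrightarrow>
            Complex (-d) y \<in> U \<and> cmod (R (Complex (-d) y)) < 1"
proof -
  define z0 where "z0 = Complex 0 y0"
  obtain r1 where r1: "r1 > 0" "ball z0 r1 \<subseteq> U" using U z0U openE unfolding z0_def by blast
  have "isCont (\<lambda>z. cmod (R z)) z0"
    using contR U z0U unfolding z0_def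
    by (intro continuous_intros) (simp add: continuous_on_eq_continuous_at)
  then obtain r2 where r2: "r2 > 0"
    "\<And>z. dist z z0 < r2 \<Longrightarrow> \<bar>cmod (R z) - cmod (R z0)\<bar> < 1 - cmod (R z0)"
    using lt unfolding continuous_at_eps_delta dist_real_def z0_def by (metis diff_gt_0_iff_gt)
  define r where "r = min r1 r2"
  show ?thesis
  proof (intro exI[of _ "r/2"] conjI allI impI)
    fix y d assume h: "\<bar>y - y0\<bar> < r/2" "0 < d" "d \<le> r/2"
    have dz: "dist (Complex (-d) y) z0 < r" unfolding z0_def using dist_left_of_axis h by simp
    thus "Complex (-d) y \<in> U" using r1 unfolding r_def by (auto simp: dist_commute)
    show "cmod (R (Complex (-d) y)) < 1" using r2(2)[of "Complex (-d) y"] dz unfolding r_def by auto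
  qed (use r1 r2 in \<open>auto simp: r_def\<close>)
qed

(* Near an axis point where Re(conj R * R') > 0, this quantity stays positive on a neighbourhood,
   so by norm_increases_rightwards |R| is smaller slightly to the left than on the axis. *)
lemma norm_lt_one_left_near_level_point:
  fixes R :: "complex \<Rightarrow> complex" and U :: "complex set"
  assumes U: "open U" and holo: "R holomorphic_on U"
    and z0U: "Complex 0 y0 \<in> U" and bnd: "\<And>y. cmod (R (Complex 0 y)) \<le> 1"
    and pos: "Re (cnj (R (Complex 0 y0)) * deriv R (Complex 0 y0)) > 0"
  shows "\<exists>e>0. \<exists>\<delta>>0. \<forall>y d. \<bar>y - y0\<bar> < e \<longrightarrow> 0 < d \<longrightarrow> d \<le> \<delta> \<longrightarrow>
            Complex (-d) y \<in> U \<and> cmod (R (Complex (-d) y)) < 1"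
proof -
  define z0 where "z0 = Complex 0 y0"
  define \<Phi> where "\<Phi> = (\<lambda>z. Re (cnj (R z) * deriv R z))"
  obtain r1 where r1: "r1 > 0" "ball z0 r1 \<subseteq> U" using U z0U openE unfolding z0_def by blast
  have "continuous_on U \<Phi>" unfolding \<Phi>_def
    using holomorphic_on_imp_continuous_on[OF holo]
      holomorphic_on_imp_continuous_on[OF holomorphic_deriv[OF holo U]]
    by (intro continuous_intros)
  hence "isCont \<Phi> z0" using U z0U unfolding z0_def by (simp add: continuous_on_eq_continuous_at)
  then obtain r2 where r2: "r2 > 0" "\<And>z. dist z z0 < r2 \<Longrightarrow> \<bar>\<Phi> z - \<Phi> z0\<bar> < \<Phi> z0"
    using pos unfolding continuous_at_eps_delta dist_real_def \<Phi>_def z0_def by metis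
  define r where "r = min r1 r2"
  show ?thesis
  proof (intro exI[of _ "r/2"] conjI allI impI)
    fix y d assume h: "\<bar>y - y0\<bar> < r/2" "0 < d" "d \<le> r/2"
    have seg: "Complex s y \<in> U \<and> \<Phi> (Complex s y) > 0" if "-d \<le> s" "s \<le> 0" for s
    proof -
      have dz: "dist (Complex s y) z0 < r"
        unfolding z0_def using dist_left_of_axis[of y y0 r "-s"] h that by simp
      hence "Complex s y \<in> U" using r1 unfolding r_def by (auto simp: dist_commute)
      moreover have "\<Phi> (Complex s y) > 0" using r2(2)[of "Complex s y"] dz unfolding r_def by auto
      ultimately show ?thesis by simp
    qed
    show "Complex (-d) y \<in> U" using seg[of "-d"] h by simp
    have "cmod (R (Complex (-d) y)) < cmod (R (Complex 0 y))"
      using norm_increases_rightwards[OF U holo \<open>0 < d\<close>] seg unfolding \<Phi>_def by blast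
    thus "cmod (R (Complex (-d) y)) < 1" using bnd[of y] by linarith
  qed (use r1 r2 in \<open>auto simp: r_def\<close>)
qed

lemma norm_lt_one_left_of_axis_local:
  fixes R :: "complex \<Rightarrow> complex" and U :: "complex set"
  assumes U: "open U" and holo: "R holomorphic_on U"
    and axis: "\<And>y. Complex 0 y \<in> U" and bnd: "\<And>y. cmod (R (Complex 0 y)) \<le> 1"
    and bdry: "\<And>y. cmod (R (Complex 0 y)) = 1 \<Longrightarrow> Re (cnj (R (Complex 0 y)) * deriv R (Complex 0 y)) > 0"
  shows "\<exists>e>0. \<exists>\<delta>>0. \<forall>y d. \<bar>y - y0\<bar> < e \<longrightarrow> 0 < d \<longrightarrow> d \<le> \<delta> \<longrightarrow>
            Complex (-d) y \<in> U \<and> cmod (R (Complex (-d) y)) < 1"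
proof (cases "cmod (R (Complex 0 y0)) = 1")
  case True
  show ?thesis by (rule norm_lt_one_left_near_level_point[OF U holo axis bnd bdry[OF True]])
next
  case False
  hence "cmod (R (Complex 0 y0)) < 1" using bnd[of y0] by simp
  thus ?thesis
    by (rule norm_lt_one_left_near_interior_point[OF U holomorphic_on_imp_continuous_on[OF holo] axis])
qed

(* By compactness of [-T,T], the local statement becomes uniform along a segment of the axis. *)
lemma norm_lt_one_left_of_axis:
  fixes R :: "complex \<Rightarrow> complex" and U :: "complex set"
  assumes U: "open U" and holo: "R holomorphic_on U"
    and axis: "\<And>y. Complex 0 y \<in> U" and bnd: "\<And>y. cmod (R (Complex 0 y)) \<le> 1"
    and bdry: "\<And>y. cmod (R (Complex 0 y)) = 1 \<Longrightarrow> Re (cnj (R (Complex 0 y)) * deriv R (Complex 0 y)) > 0"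
  shows "\<exists>\<delta>>0. \<forall>d. 0 < d \<and> d \<le> \<delta> \<longrightarrow> (\<forall>y. \<bar>y\<bar> \<le> T \<longrightarrow>
            Complex (-d) y \<in> U \<and> cmod (R (Complex (-d) y)) < 1)"
proof -
  obtain e \<delta> where e: "\<And>y0. e y0 > 0" and \<delta>: "\<And>y0. \<delta> y0 > 0"
    and good: "\<And>y0 y d. \<bar>y - y0\<bar> < e y0 \<Longrightarrow> 0 < d \<Longrightarrow> d \<le> \<delta> y0 \<Longrightarrow>
            Complex (-d) y \<in> U \<and> cmod (R (Complex (-d) y)) < 1"
    using norm_lt_one_left_of_axis_local[OF assms] by metis
  have cover: "{-T..T} \<subseteq> (\<Union>y0\<in>{-T..T}. ball y0 (e y0))" using e by force
  obtain C where C: "C \<subseteq> {-T..T}" "finite C" "{-T..T} \<subseteq> (\<Union>y0\<in>C. ball y0 (e y0))"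
    by (rule compactE_image[OF compact_Icc _ cover]) simp_all
  define m where "m = Min (insert 1 (\<delta> ` C))"
  have m0: "m > 0" unfolding m_def using C(2) \<delta> by auto
  show ?thesis
  proof (intro exI[of _ m] conjI allI impI)
    fix d y assume h: "0 < d \<and> d \<le> m" "\<bar>y\<bar> \<le> T"
    hence "y \<in> {-T..T}" by auto
    then obtain y0 where y0: "y0 \<in> C" "y \<in> ball y0 (e y0)" using C(3) by blast
    have "m \<le> \<delta> y0" unfolding m_def using C(2) y0(1) by simp
    moreover have "\<bar>y - y0\<bar> < e y0" using y0(2) by (simp add: dist_real_def abs_minus_commute)
    ultimately show "Complex (-d) y \<in> U" "cmod (R (Complex (-d) y)) < 1" using good h by auto
  qed (use m0 in auto)
qed


lemma eventually_poly_nonzero_on_axis: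
  fixes p :: "complex poly"
  assumes "p \<noteq> 0"
  shows "eventually (\<lambda>y. poly p (Complex 0 y) \<noteq> 0) (at y0)"
proof -
  have "finite ((\<lambda>y. Complex 0 y) -` {z. poly p z = 0})"
    by (rule finite_vimageI[OF poly_roots_finite[OF assms]]) (auto simp: inj_on_def)
  hence "eventually (\<lambda>y. y \<notin> (\<lambda>y. Complex 0 y) -` {z. poly p z = 0}) (at y0)"
    using islimpt_finite islimpt_iff_eventually by blast
  thus ?thesis by simp
qed

lemma isCont_Complex_axis: "isCont (\<lambda>y. Complex 0 y) y"
  unfolding isCont_def by (rule tendsto_Complex) auto

lemma dominated_poly_vanishes:
  fixes p q :: "complex poly" and \<gamma> :: "real \<Rightarrow> complex"
  assumes \<gamma>: "isCont \<gamma> y0"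
    and le: "eventually (\<lambda>y. cmod (poly q (\<gamma> y)) \<le> cmod (poly p (\<gamma> y))) (at y0)"
    and p0: "poly p (\<gamma> y0) = 0"
  shows "poly q (\<gamma> y0) = 0"
proof -
  have lim: "((\<lambda>y. cmod (poly r (\<gamma> y))) \<longlongrightarrow> cmod (poly r (\<gamma> y0))) (at y0)" for r :: "complex poly"
    using \<gamma> by (intro tendsto_intros isCont_tendsto_compose[where g="poly r"]) (auto simp: isCont_def)
  have "cmod (poly q (\<gamma> y0)) \<le> cmod (poly p (\<gamma> y0))"
    by (rule tendsto_le[OF _ lim[of p] lim[of q] le]) simp
  thus ?thesis using p0 by simp
qed

lemma ratio_extends_axis_profile:
  fixes p q :: "complex poly" and \<phi> :: "real \<Rightarrow> complex"
  assumes p0: "p \<noteq> 0" and coprime: "\<And>a. poly p a = 0 \<Longrightarrow> poly q a \<noteq> 0"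
    and agree: "\<And>y0. eventually (\<lambda>y. \<phi> y = poly q (Complex 0 y) / poly p (Complex 0 y)) (at y0)"
    and bound: "\<And>y. cmod (\<phi> y) \<le> 1" and cont: "\<And>y. isCont \<phi> y"
  shows "poly p (Complex 0 y) \<noteq> 0" and "poly q (Complex 0 y) / poly p (Complex 0 y) = \<phi> y"
proof -
  show axis: "poly p (Complex 0 y) \<noteq> 0" for y
  proof
    assume py: "poly p (Complex 0 y) = 0"
    have "eventually (\<lambda>x. cmod (poly q (Complex 0 x)) \<le> cmod (poly p (Complex 0 x))) (at y)"
      using agree[of y] eventually_poly_nonzero_on_axis[OF p0, of y]
    proof eventually_elim
      case (elim x)
      thus ?case using bound[of x] by (simp add: norm_divide divide_le_eq)
    qed
    hence "poly q (Complex 0 y) = 0" by (rule dominated_poly_vanishes[OF isCont_Complex_axis _ py])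
    thus False using coprime py by blast
  qed
  define r where "r = (\<lambda>x. poly q (Complex 0 x) / poly p (Complex 0 x))"
  have "isCont (\<lambda>x. poly q (Complex 0 x)) y" "isCont (\<lambda>x. poly p (Complex 0 x)) y"
    by (rule isCont_o2[OF isCont_Complex_axis poly_isCont])+
  hence "isCont r y" unfolding r_def using axis[of y] by (rule isCont_divide)
  have "(\<phi> \<longlongrightarrow> r y) (at y)"
  proof (rule Lim_transform_eventually)
    show "(r \<longlongrightarrow> r y) (at y)" using \<open>isCont r y\<close> by (simp add: isCont_def)
    show "eventually (\<lambda>x. r x = \<phi> x) (at y)" using agree[of y] by eventually_elim (simp add: r_def)
  qed
  moreover have "(\<phi> \<longlongrightarrow> \<phi> y) (at y)" using cont[of y] by (simp add: isCont_def)
  ultimately have "r y = \<phi> y" by (rule tendsto_unique[OF trivial_limit_at])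
  thus "poly q (Complex 0 y) / poly p (Complex 0 y) = \<phi> y" by (simp add: r_def)
qed

lemma boundary_derivative_from_shift:
  fixes R :: "complex \<Rightarrow> complex" and \<psi> :: "real \<Rightarrow> complex" and G :: complex
  assumes deriv: "(R has_field_derivative G) (at (Complex 0 y0))"
    and norm1: "cmod (R (Complex 0 y0)) = 1"
    and shift: "\<And>t. R (Complex 0 (y0 + t)) = R (Complex 0 y0) * \<psi> t"
    and lim: "(\<lambda>n. real (Suc n) * Im (\<psi> (inverse (real (Suc n))))) \<longlonglongrightarrow> m"
  shows "Re (cnj (R (Complex 0 y0)) * G) = m"
proof -
  define w where "w = R (Complex 0 y0)"
  define t where "t = (\<lambda>n. inverse (real (Suc n)))"
  have ww: "cnj w * w = 1" using norm1 unfolding w_def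
    by (simp add: complex_norm_square[symmetric] mult.commute)
  have "t \<longlonglongrightarrow> 0" unfolding t_def by (rule LIMSEQ_inverse_real_of_nat)
  from tendsto_add[OF tendsto_const[of y0] this]
  have "((\<lambda>n. Complex 0 (y0 + t n)) \<longlongrightarrow> Complex 0 y0) sequentially"
    by (intro tendsto_Complex tendsto_const) simp
  moreover have "eventually (\<lambda>n. Complex 0 (y0 + t n) \<noteq> Complex 0 y0) sequentially"
    by (simp add: t_def)
  ultimately have to_y0: "filterlim (\<lambda>n. Complex 0 (y0 + t n)) (at (Complex 0 y0)) sequentially"
    by (rule filterlim_atI)
  have "((\<lambda>z. (R z - w) / (z - Complex 0 y0)) \<longlongrightarrow> G) (at (Complex 0 y0))"
    using deriv unfolding w_def by (simp add: has_field_derivative_iff)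
  from filterlim_compose[OF this to_y0]
  have "(\<lambda>n. (R (Complex 0 (y0 + t n)) - w) / (Complex 0 (y0 + t n) - Complex 0 y0)) \<longlonglongrightarrow> G"
    by simp
  moreover have "(R (Complex 0 (y0 + t n)) - w) / (Complex 0 (y0 + t n) - Complex 0 y0)
      = w * ((\<psi> (t n) - 1) / (\<i> * of_real (t n)))" for n
  proof -
    have "Complex 0 (y0 + t n) - Complex 0 y0 = \<i> * of_real (t n)" by (simp add: complex_eq_iff)
    thus ?thesis using shift[of "t n"] unfolding w_def by (simp add: algebra_simps)
  qed
  ultimately have "(\<lambda>n. cnj w * (w * ((\<psi> (t n) - 1) / (\<i> * of_real (t n))))) \<longlonglongrightarrow> cnj w * G"
    by (intro tendsto_intros) simp
  hence "(\<lambda>n. Re ((\<psi> (t n) - 1) / (\<i> * of_real (t n)))) \<longlonglongrightarrow> Re (cnj w * G)"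
    by (intro tendsto_intros) (simp add: mult.assoc[symmetric] ww)
  moreover have "Re ((\<psi> (t n) - 1) / (\<i> * of_real (t n))) = real (Suc n) * Im (\<psi> (inverse (real (Suc n))))"
    for n unfolding t_def by (simp add: Re_divide field_simps)
  ultimately have "(\<lambda>n. real (Suc n) * Im (\<psi> (inverse (real (Suc n))))) \<longlonglongrightarrow> Re (cnj w * G)"
    by simp
  thus ?thesis using lim LIMSEQ_unique unfolding w_def by blast
qed

lemma ratio_contractive_left_of_axis:
  fixes p q :: "complex poly" and \<phi> \<psi> :: "real \<Rightarrow> complex" and m T :: real
  assumes p0: "p \<noteq> 0" and coprime: "\<And>a. poly p a = 0 \<Longrightarrow> poly q a \<noteq> 0"
    and agree: "\<And>y0. eventually (\<lambda>y. \<phi> y = poly q (Complex 0 y) / poly p (Complex 0 y)) (at y0)"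
    and bound: "\<And>y. cmod (\<phi> y) \<le> 1" and cont: "\<And>y. isCont \<phi> y"
    and shift: "\<And>y0 t. cmod (\<phi> y0) = 1 \<Longrightarrow> \<phi> (y0 + t) = \<phi> y0 * \<psi> t"
    and lim: "(\<lambda>n. real (Suc n) * Im (\<psi> (inverse (real (Suc n))))) \<longlonglongrightarrow> m"
    and m: "m > 0"
  shows "\<exists>\<delta>>0. \<forall>d. 0 < d \<and> d \<le> \<delta> \<longrightarrow> (\<forall>y. \<bar>y\<bar> \<le> T \<longrightarrow>
        cmod (poly q (Complex (-d) y)) < cmod (poly p (Complex (-d) y)))"
proof -
  note axis = ratio_extends_axis_profile[OF p0 coprime agree bound cont]
  define R where "R = (\<lambda>z. poly q z / poly p z)"
  define U where "U = {z. poly p z \<noteq> 0}"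
  have U: "open U" unfolding U_def by (intro open_Collect_neq continuous_intros)
  have holo: "R holomorphic_on U" unfolding R_def U_def by (intro holomorphic_intros) auto
  have R_axis: "R (Complex 0 y) = \<phi> y" for y unfolding R_def by (rule axis(2))
  have bdry: "Re (cnj (R (Complex 0 y0)) * deriv R (Complex 0 y0)) > 0"
    if norm1: "cmod (R (Complex 0 y0)) = 1" for y0
  proof -
    have "(R has_field_derivative deriv R (Complex 0 y0)) (at (Complex 0 y0))"
      using holo U axis(1)[of y0] by (intro holomorphic_derivI) (auto simp: U_def)
    moreover have "R (Complex 0 (y0 + t)) = R (Complex 0 y0) * \<psi> t" for t
      using shift[of y0 t] norm1 by (simp add: R_axis)
    ultimately have "Re (cnj (R (Complex 0 y0)) * deriv R (Complex 0 y0)) = m"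
      using boundary_derivative_from_shift norm1 lim by blast
    thus ?thesis using m by simp
  qed
  obtain \<delta> where \<delta>: "\<delta> > 0" "\<forall>d. 0 < d \<and> d \<le> \<delta> \<longrightarrow> (\<forall>y. \<bar>y\<bar> \<le> T \<longrightarrow>
        Complex (-d) y \<in> U \<and> cmod (R (Complex (-d) y)) < 1)"
    using norm_lt_one_left_of_axis[OF U holo, of T] axis(1) bdry R_axis bound unfolding U_def by force
  show ?thesis
  proof (intro exI[of _ \<delta>] conjI allI impI)
    fix d y assume "0 < d \<and> d \<le> \<delta>" "\<bar>y\<bar> \<le> T"
    hence "poly p (Complex (-d) y) \<noteq> 0" "cmod (R (Complex (-d) y)) < 1" using \<delta> by (auto simp: U_def)
    thus "cmod (poly q (Complex (-d) y)) < cmod (poly p (Complex (-d) y))"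
      by (simp add: R_def norm_divide divide_less_eq)
  qed (use \<delta> in auto)
qed

lemma zeros_rhp_by_axis_profile:
  fixes p q :: "complex poly" and \<phi> \<psi> :: "real \<Rightarrow> complex" and m :: real
  assumes deg: "degree q < degree p"
    and on_axis: "\<And>y. poly p (Complex 0 y) \<noteq> 0 \<Longrightarrow> \<phi> y = poly q (Complex 0 y) / poly p (Complex 0 y)"
    and bound: "\<And>y. cmod (\<phi> y) \<le> 1" and cont: "\<And>y. isCont \<phi> y"
    and shift: "\<And>y0 t. cmod (\<phi> y0) = 1 \<Longrightarrow> \<phi> (y0 + t) = \<phi> y0 * \<psi> t"
    and lim: "(\<lambda>n. real (Suc n) * Im (\<psi> (inverse (real (Suc n))))) \<longlonglongrightarrow> m"
    and m: "m > 0"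
  shows "zeros_rhp (p - q) = zeros_rhp p"
proof (cases "q = 0")
  case True
  thus ?thesis by simp
next
  case q0: False
  define h where "h = gcd p q"
  define p1 where "p1 = p div h"
  define q1 where "q1 = q div h"
  have pq: "p = h * p1" "q = h * q1" unfolding h_def p1_def q1_def by simp_all
  have p0: "p \<noteq> 0" using deg by auto
  have p10: "p1 \<noteq> 0" using pq p0 by auto
  have cop: "coprime p1 q1" unfolding p1_def q1_def h_def using q0 by (intro div_gcd_coprime) simp
  have no_common_root: "poly q1 a \<noteq> 0" if "poly p1 a = 0" for a
  proof
    assume "poly q1 a = 0"
    hence "[:-a, 1:] dvd p1" "[:-a, 1:] dvd q1" using that by (simp_all add: poly_eq_0_iff_dvd)
    hence "is_unit [:-a, 1:]" by (rule coprime_common_divisor[OF cop])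
    thus False by (simp add: is_unit_iff_degree)
  qed
  have agree: "eventually (\<lambda>y. \<phi> y = poly q1 (Complex 0 y) / poly p1 (Complex 0 y)) (at y0)" for y0
    using eventually_poly_nonzero_on_axis[OF p0, of y0]
  proof eventually_elim
    case (elim y)
    hence "poly h (Complex 0 y) \<noteq> 0" using pq by auto
    thus ?case using on_axis[OF elim] unfolding pq by simp
  qed
  show ?thesis
    using ratio_contractive_left_of_axis[OF p10 no_common_root agree bound cont shift lim m]
    by (intro zeros_rhp_perturbation[OF pq deg]) blast
qed


definition laplace_fourier :: "'a measure \<Rightarrow> ('a \<Rightarrow> real) \<Rightarrow> ('a \<Rightarrow> real) \<Rightarrow> complex \<Rightarrow> real \<Rightarrow> complex"
  where "laplace_fourier M D X s y = (\<integral>\<omega>. exp (- s * of_real (D \<omega>) + Complex 0 y * of_real (X \<omega>)) \<partial>M)"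

definition charfun :: "'a measure \<Rightarrow> ('a \<Rightarrow> real) \<Rightarrow> real \<Rightarrow> complex"
  where "charfun M X t = (\<integral>\<omega>. exp (Complex 0 t * of_real (X \<omega>)) \<partial>M)"

lemma scaled_sin_tendsto:
  "(\<lambda>n. real (Suc n) * sin (inverse (real (Suc n)) * x)) \<longlonglongrightarrow> x"
proof -
  have "((\<lambda>r. sin (x * r)) has_real_derivative x) (at 0)"
    by (auto intro!: derivative_eq_intros)
  hence "((\<lambda>r. (sin (x * (0 + r)) - sin (x * 0)) / r) \<longlongrightarrow> x) (at 0)"
    by (simp add: DERIV_def)
  moreover have "filterlim (\<lambda>n. inverse (real (Suc n))) (at 0) sequentially"
    by (rule filterlim_atI[OF LIMSEQ_inverse_real_of_nat]) simp
  ultimately have "((\<lambda>n. (sin (x * (0 + inverse (real (Suc n)))) - sin (x * 0)) / inverse (real (Suc n)))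
      \<longlongrightarrow> x) sequentially"
    by (rule filterlim_compose)
  thus ?thesis by (simp add: mult.commute divide_inverse)
qed

lemma scaled_sin_bound: "\<bar>real (Suc n) * sin (inverse (real (Suc n)) * x)\<bar> \<le> \<bar>x\<bar>"
proof -
  have "\<bar>sin (inverse (real (Suc n)) * x)\<bar> \<le> \<bar>inverse (real (Suc n)) * x\<bar>"
    by (rule abs_sin_x_le_abs_x)
  hence "real (Suc n) * \<bar>sin (inverse (real (Suc n)) * x)\<bar> \<le> real (Suc n) * \<bar>inverse (real (Suc n)) * x\<bar>"
    by (intro mult_left_mono) auto
  also have "\<dots> = \<bar>x\<bar>" by (simp add: abs_mult)
  finally show ?thesis by (simp add: abs_mult)
qed

context prob_space
begin

lemma AE_eq_1_if_norm_le_1_and_integral_eq_1: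
  fixes V :: "'a \<Rightarrow> complex"
  assumes Vi: "integrable M V" and Vb: "AE \<omega> in M. cmod (V \<omega>) \<le> 1" and Vint: "integral\<^sup>L M V = 1"
  shows "AE \<omega> in M. V \<omega> = 1"
proof -
  have i1: "integrable M (\<lambda>\<omega>. 1 - Re (V \<omega>))" using Vi by auto
  have "integral\<^sup>L M (\<lambda>\<omega>. 1 - Re (V \<omega>)) = 0"
    using Vi Vint by (simp add: integral_diff prob_space)
  moreover have "AE \<omega> in M. 0 \<le> 1 - Re (V \<omega>)" using Vb
  proof eventually_elim
    case (elim \<omega>)
    thus ?case using complex_Re_le_cmod[of "V \<omega>"] by linarith
  qed
  ultimately have "AE \<omega> in M. 1 - Re (V \<omega>) = 0" using integral_nonneg_eq_0_iff_AE[OF i1] by simp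
  thus ?thesis using Vb
  proof eventually_elim
    case (elim \<omega>)
    hence "Re (V \<omega>) = 1" by simp
    moreover have "(Re (V \<omega>))^2 + (Im (V \<omega>))^2 \<le> 1"
      using elim(2) by (simp add: cmod_def power_le_one_iff)
    ultimately show ?case by (simp add: complex_eq_iff)
  qed
qed

lemma laplace_fourier_integrand:
  assumes Dm: "D \<in> borel_measurable M" and Xm: "X \<in> borel_measurable M"
    and D0: "AE \<omega> in M. D \<omega> \<ge> 0" and s: "Re s \<ge> 0"
  shows "(\<lambda>\<omega>. exp (- s * of_real (D \<omega>) + Complex 0 y * of_real (X \<omega>))) \<in> borel_measurable M"
    and "AE \<omega> in M. cmod (exp (- s * of_real (D \<omega>) + Complex 0 y * of_real (X \<omega>))) \<le> 1"
    and "integrable M (\<lambda>\<omega>. exp (- s * of_real (D \<omega>) + Complex 0 y * of_real (X \<omega>)))"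
proof -
  show m: "(\<lambda>\<omega>. exp (- s * of_real (D \<omega>) + Complex 0 y * of_real (X \<omega>))) \<in> borel_measurable M"
    using Dm Xm by measurable
  show b: "AE \<omega> in M. cmod (exp (- s * of_real (D \<omega>) + Complex 0 y * of_real (X \<omega>))) \<le> 1"
    using D0 by eventually_elim (simp add: mult_nonneg_nonneg s)
  show "integrable M (\<lambda>\<omega>. exp (- s * of_real (D \<omega>) + Complex 0 y * of_real (X \<omega>)))"
    by (rule integrable_const_bound[OF b m])
qed

lemma norm_laplace_fourier_le_1:
  assumes "D \<in> borel_measurable M" "X \<in> borel_measurable M" "AE \<omega> in M. D \<omega> \<ge> 0" "Re s \<ge> 0"
  shows "cmod (laplace_fourier M D X s y) \<le> 1"
proof -
  note Z = laplace_fourier_integrand[OF assms, of y]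
  have "cmod (laplace_fourier M D X s y)
      \<le> (\<integral>\<omega>. cmod (exp (- s * of_real (D \<omega>) + Complex 0 y * of_real (X \<omega>))) \<partial>M)"
    unfolding laplace_fourier_def by (rule integral_norm_bound)
  also have "\<dots> \<le> 1" by (rule integral_le_const[OF integrable_norm[OF Z(3)] Z(2)])
  finally show ?thesis .
qed

lemma isCont_laplace_fourier:
  assumes "D \<in> borel_measurable M" "X \<in> borel_measurable M" "AE \<omega> in M. D \<omega> \<ge> 0" "Re s \<ge> 0"
  shows "isCont (laplace_fourier M D X s) y"
proof (rule continuous_at_sequentially[THEN iffD2], intro allI impI)
  fix u :: "nat \<Rightarrow> real" assume u: "u \<longlonglongrightarrow> y"
  note Z = laplace_fourier_integrand[OF assms]
  have "(\<lambda>n. laplace_fourier M D X s (u n)) \<longlonglongrightarrow> laplace_fourier M D X s y"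
    unfolding laplace_fourier_def
  proof (rule integral_dominated_convergence[where w="\<lambda>_. 1"])
    show "AE \<omega> in M. (\<lambda>n. exp (- s * of_real (D \<omega>) + Complex 0 (u n) * of_real (X \<omega>)))
        \<longlonglongrightarrow> exp (- s * of_real (D \<omega>) + Complex 0 y * of_real (X \<omega>))"
      using u by (intro AE_I2) (auto simp: complex_of_real_def[symmetric] intro!: tendsto_intros)
  qed (use Z in auto)
  thus "(laplace_fourier M D X s \<circ> u) \<longlonglongrightarrow> laplace_fourier M D X s y" by (simp add: o_def)
qed

(* If |phi(y0)| = 1, the integrand is a.s. equal to phi(y0), so shifting y factors out the
   characteristic function of X. *)
lemma laplace_fourier_shift:
  assumes Dm: "D \<in> borel_measurable M" and Xm: "X \<in> borel_measurable M"
    and D0: "AE \<omega> in M. D \<omega> \<ge> 0" and s: "Re s \<ge> 0"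
    and norm1: "cmod (laplace_fourier M D X s y0) = 1"
  shows "laplace_fourier M D X s (y0 + t) = laplace_fourier M D X s y0 * charfun M X t"
proof -
  define Z where "Z = (\<lambda>\<omega>. exp (- s * of_real (D \<omega>) + Complex 0 y0 * of_real (X \<omega>)))"
  define w where "w = laplace_fourier M D X s y0"
  note Z_props = laplace_fourier_integrand[OF Dm Xm D0 s, of y0]
  have Zm: "Z \<in> borel_measurable M" and Zb: "AE \<omega> in M. cmod (Z \<omega>) \<le> 1" and Zi: "integrable M Z"
    unfolding Z_def by (fact Z_props)+
  have ww: "cnj w * w = 1"
    using norm1 unfolding w_def by (simp add: complex_norm_square[symmetric] mult.commute)
  have "AE \<omega> in M. cnj w * Z \<omega> = 1"
  proof (rule AE_eq_1_if_norm_le_1_and_integral_eq_1)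
    show "integrable M (\<lambda>\<omega>. cnj w * Z \<omega>)" using Zi by simp
    show "AE \<omega> in M. cmod (cnj w * Z \<omega>) \<le> 1"
      using Zb by eventually_elim (simp add: norm_mult norm1[folded w_def])
    show "(\<integral>\<omega>. cnj w * Z \<omega> \<partial>M) = 1"
      using ww by (simp add: w_def laplace_fourier_def Z_def)
  qed
  hence Zw: "AE \<omega> in M. Z \<omega> = w"
  proof eventually_elim
    case (elim \<omega>)
    hence "w * (cnj w * Z \<omega>) = w" by simp
    thus ?case using ww by (simp add: mult.assoc[symmetric] mult.commute[of w])
  qed
  have split: "exp (- s * of_real (D \<omega>) + Complex 0 (y0 + t) * of_real (X \<omega>))
      = Z \<omega> * exp (Complex 0 t * of_real (X \<omega>))" for \<omega>
  proof -
    have "Complex 0 (y0 + t) * of_real (X \<omega>) = Complex 0 y0 * of_real (X \<omega>) + Complex 0 t * of_real (X \<omega>)"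
      by (simp add: complex_eq_iff distrib_right)
    hence "- s * of_real (D \<omega>) + Complex 0 (y0 + t) * of_real (X \<omega>)
      = (- s * of_real (D \<omega>) + Complex 0 y0 * of_real (X \<omega>)) + Complex 0 t * of_real (X \<omega>)" by simp
    thus ?thesis unfolding Z_def by (simp only: exp_add)
  qed
  have "laplace_fourier M D X s (y0 + t) = (\<integral>\<omega>. Z \<omega> * exp (Complex 0 t * of_real (X \<omega>)) \<partial>M)"
    unfolding laplace_fourier_def split ..
  also have "\<dots> = (\<integral>\<omega>. w * exp (Complex 0 t * of_real (X \<omega>)) \<partial>M)"
    using Zw Zm Xm by (intro integral_cong_AE) auto
  also have "\<dots> = w * charfun M X t" unfolding charfun_def by simp
  finally show ?thesis unfolding w_def .
qed

lemma charfun_Im_derivative_at_0: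
  assumes Xm: "X \<in> borel_measurable M" and Xi: "integrable M X"
  shows "(\<lambda>n. real (Suc n) * Im (charfun M X (inverse (real (Suc n))))) \<longlonglongrightarrow> (\<integral>\<omega>. X \<omega> \<partial>M)"
proof -
  have "real (Suc n) * Im (charfun M X (inverse (real (Suc n))))
      = (\<integral>\<omega>. real (Suc n) * sin (inverse (real (Suc n)) * X \<omega>) \<partial>M)" for n
  proof -
    let ?t = "inverse (real (Suc n))"
    have "integrable M (\<lambda>\<omega>. exp (Complex 0 ?t * of_real (X \<omega>)))"
      using Xm by (intro integrable_const_bound[where B=1]) auto
    hence "Im (charfun M X ?t) = (\<integral>\<omega>. Im (exp (Complex 0 ?t * of_real (X \<omega>))) \<partial>M)"
      unfolding charfun_def by (rule integral_Im[symmetric])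
    also have "\<dots> = (\<integral>\<omega>. sin (?t * X \<omega>) \<partial>M)"
      by (intro arg_cong[where f="integral\<^sup>L M"] ext) (simp add: Im_exp)
    finally show ?thesis by simp
  qed
  moreover have "(\<lambda>n. \<integral>\<omega>. real (Suc n) * sin (inverse (real (Suc n)) * X \<omega>) \<partial>M) \<longlonglongrightarrow> (\<integral>\<omega>. X \<omega> \<partial>M)"
    by (rule integral_dominated_convergence[where w="\<lambda>\<omega>. \<bar>X \<omega>\<bar>"])
      (use Xm Xi scaled_sin_tendsto scaled_sin_bound in auto)
  ultimately show ?thesis by simp
qed

end


theorem propositionA1:
  fixes M :: "'a measure" and A B1 B2 :: "'a \<Rightarrow> real" and c1 c2 :: real
    and P Q :: "complex poly poly poly" and f g :: "complex poly poly" and s1 :: complex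
  assumes "prob_space M"
    and "A \<in> borel_measurable M" "B1 \<in> borel_measurable M" "B2 \<in> borel_measurable M"
    and "AE \<omega> in M. A \<omega> > 0" "AE \<omega> in M. B1 \<omega> \<ge> 0" "AE \<omega> in M. B2 \<omega> \<ge> 0"
    and "c1 > 0" "c2 > 0"
    and "AE \<omega> in M. B1 \<omega> / c1 \<ge> B2 \<omega> / c2"
    \<comment> \<open>rationality of H(q0,q1,q2) = E exp(-q0 A - q1 B1 - q2 B2)\<close>
    and "P \<noteq> 0"
    and "\<And>q0 q1 q2. Re q0 \<ge> 0 \<Longrightarrow> Re q1 \<ge> 0 \<Longrightarrow> Re q2 \<ge> 0 \<Longrightarrow> eval3 P q0 q1 q2 \<noteq> 0 \<Longrightarrow>
        (\<integral>\<omega>. exp (- (q0 * of_real (A \<omega>) + q1 * of_real (B1 \<omega>) + q2 * of_real (B2 \<omega>))) \<partial>M)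
          = eval3 Q q0 q1 q2 / eval3 P q0 q1 q2"
    \<comment> \<open>the induced representation E exp(-s1 D + z X2) = f(s1,z)/g(s1,z)\<close>
    and "\<And>s z. Re s \<ge> 0 \<Longrightarrow> Re z = 0 \<Longrightarrow> eval2 g s z \<noteq> 0 \<Longrightarrow>
        (\<integral>\<omega>. exp (- s * of_real (B1 \<omega> / c1 - B2 \<omega> / c2) + z * of_real (A \<omega> - B2 \<omega> / c2)) \<partial>M)
          = eval2 f s z / eval2 g s z"
    and "\<And>s. degree (sect2 f s) < degree (sect2 g s)"
    \<comment> \<open>drift condition\<close>
    and "integrable M A" "integrable M B2"
    and "c2 * (\<integral>\<omega>. A \<omega> \<partial>M) - (\<integral>\<omega>. B2 \<omega> \<partial>M) > 0"
    and "Re s1 \<ge> 0"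
  shows "zeros_rhp (sect2 g s1 - sect2 f s1) = zeros_rhp (sect2 g s1)"
proof -
  interpret prob_space M by (rule assms(1))
  define D where "D = (\<lambda>\<omega>. B1 \<omega> / c1 - B2 \<omega> / c2)"
  define X where "X = (\<lambda>\<omega>. A \<omega> - B2 \<omega> / c2)"
  have Dm: "D \<in> borel_measurable M" unfolding D_def using assms(3,4) by measurable
  have Xm: "X \<in> borel_measurable M" unfolding X_def using assms(2,4) by measurable
  have D0: "AE \<omega> in M. D \<omega> \<ge> 0" using assms(10) by eventually_elim (simp add: D_def)
  have Xi: "integrable M X" unfolding X_def using assms(15,16) by auto
  have "(\<integral>\<omega>. X \<omega> \<partial>M) = (c2 * (\<integral>\<omega>. A \<omega> \<partial>M) - (\<integral>\<omega>. B2 \<omega> \<partial>M)) / c2"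
    unfolding X_def using assms(9,15,16) by (simp add: field_simps)
  hence EX: "(\<integral>\<omega>. X \<omega> \<partial>M) > 0" using assms(9,17) by simp
  show ?thesis
  proof (rule zeros_rhp_by_axis_profile[OF assms(14), where \<phi>="laplace_fourier M D X s1"
        and \<psi>="charfun M X" and m="\<integral>\<omega>. X \<omega> \<partial>M"])
    show "laplace_fourier M D X s1 y = poly (sect2 f s1) (Complex 0 y) / poly (sect2 g s1) (Complex 0 y)"
      if "poly (sect2 g s1) (Complex 0 y) \<noteq> 0" for y
      using assms(13)[of s1 "Complex 0 y"] assms(18) that
      unfolding laplace_fourier_def D_def X_def eval2_def by simp
  qed (use norm_laplace_fourier_le_1[OF Dm Xm D0 assms(18)] isCont_laplace_fourier[OF Dm Xm D0 assms(18)]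
        laplace_fourier_shift[OF Dm Xm D0 assms(18)] charfun_Im_derivative_at_0[OF Xm Xi] EX in auto)
qed

end
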